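(* For every $x\in\mathcal X$ there exists $\mu_0(x)\ge 0$ such that for all $\mu\ge\mu_0(x)$, $D^\mu(x)=\mathbb 1\{T(x)\ge 1-\alpha\}$ and $C^\mu(x)\in\arg\max_{C\in\mathcal I}p_C(x)$; moreover, if several sets share this maximal value of $p_C(x)$, then $C^\mu(x)$ is one with the largest weight $w(C)$ among them.
   Context: Let $(X,Y)\sim P_{XY}$ on $\mathcal X\times\mathcal Y$, $\alpha\in(0,1)$. $\mathcal I$ is a finite collection of subsets of $\mathcal Y$ enumerated in a fixed lexicographic order, $w:\mathcal I\to(0,B)$ a bounded positive weight. For $C\in\mathcal I$ let $p_C(x)=\mathbb P(Y\in C\mid X=x)$, $\ell_{x,C}(\mu)=w(C)p_C(x)+\mu(p_C(x)-(1-\alpha))$ for $\mu\ge0$, $\mathcal U_x(\mu)=\max_{C\in\mathcal I}\ell_{x,C}(\mu)$. $C^\mu(x)$ is a maximizer of $\ell_{x,C}(\mu)$ over $C\in\mathcal I$, ties broken in favor of the largest $w(C)$ and then smallest index; $D^\mu(x)=\mathbb 1\{\mathcal U_x(\mu)\ge0\}$; $T(x)=\max_{C\in\mathcal I}p_C(x)$. *)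

theory Defs
  imports "HOL-Probability.Probability"
begin

text \<open>The conditional law of Y given X = x is modelled by a Markov kernel
  K :: 'x => 'y measure (each K x a probability measure on Y).
  The finite collection I is a list (its enumeration order = fixed lexicographic order);
  the index of C is its position in the list.\<close>

definition pC :: "('x \<Rightarrow> 'y measure) \<Rightarrow> 'y set \<Rightarrow> 'x \<Rightarrow> real" where
  "pC K C x = measure (K x) C"

definition ell :: "('x \<Rightarrow> 'y measure) \<Rightarrow> ('y set \<Rightarrow> real) \<Rightarrow> real \<Rightarrow> 'x \<Rightarrow> 'y set \<Rightarrow> real \<Rightarrow> real" where
  "ell K w \<alpha> x C \<mu> = w C * pC K C x + \<mu> * (pC K C x - (1 - \<alpha>))"

definition U :: "('x \<Rightarrow> 'y measure) \<Rightarrow> ('y set \<Rightarrow> real) \<Rightarrow> real \<Rightarrow> 'y set list \<Rightarrow> 'x \<Rightarrow> real \<Rightarrow> real" where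
  "U K w \<alpha> I x \<mu> = Max ((\<lambda>C. ell K w \<alpha> x C \<mu>) ` set I)"

definition Cidx :: "('x \<Rightarrow> 'y measure) \<Rightarrow> ('y set \<Rightarrow> real) \<Rightarrow> real \<Rightarrow> 'y set list \<Rightarrow> 'x \<Rightarrow> real \<Rightarrow> nat" where
  "Cidx K w \<alpha> I x \<mu> =
     (LEAST i. i < length I \<and> ell K w \<alpha> x (I ! i) \<mu> = U K w \<alpha> I x \<mu> \<and>
        w (I ! i) = Max {w (I ! j) | j. j < length I \<and> ell K w \<alpha> x (I ! j) \<mu> = U K w \<alpha> I x \<mu>})"

definition Cmu :: "('x \<Rightarrow> 'y measure) \<Rightarrow> ('y set \<Rightarrow> real) \<Rightarrow> real \<Rightarrow> 'y set list \<Rightarrow> 'x \<Rightarrow> real \<Rightarrow> 'y set" where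
  "Cmu K w \<alpha> I x \<mu> = I ! Cidx K w \<alpha> I x \<mu>"

definition Dmu :: "('x \<Rightarrow> 'y measure) \<Rightarrow> ('y set \<Rightarrow> real) \<Rightarrow> real \<Rightarrow> 'y set list \<Rightarrow> 'x \<Rightarrow> real \<Rightarrow> real" where
  "Dmu K w \<alpha> I x \<mu> = (if U K w \<alpha> I x \<mu> \<ge> 0 then 1 else 0)"

definition T :: "('x \<Rightarrow> 'y measure) \<Rightarrow> 'y set list \<Rightarrow> 'x \<Rightarrow> real" where
  "T K I x = Max ((\<lambda>C. pC K C x) ` set I)"

end

theory Submission
  imports Defs
begin

text \<open>For fixed x every objective \<open>\<mu> \<mapsto> ell K w \<alpha> x C \<mu>\<close> is affine in \<mu> with slope
  \<open>pC K C x - (1 - \<alpha>)\<close>. Since I is finite, for all large \<mu> the sets of maximal slope, i.e. those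
  attaining T, beat all others; among them the objective differs only by \<open>w C * T\<close>, so the
  tie-breaking rule picks a set of maximal weight. The sign of the maximum U is eventually the
  sign of its slope \<open>T - (1 - \<alpha>)\<close>, and when this slope is zero, U is still at least
  \<open>w C * T \<ge> 0\<close>.\<close>

lemma eventually_affine_less_at_top:
  fixes a b s t :: real
  assumes "s < t"
  shows "eventually (\<lambda>\<mu>. a + \<mu> * s < b + \<mu> * t) at_top"
  using eventually_gt_at_top[of "(a - b) / (t - s)"]
proof eventually_elim
  case (elim \<mu>)
  then have "a - b < \<mu> * (t - s)"
    using assms by (simp add: pos_divide_less_eq)
  then show ?case by (simp add: algebra_simps)
qed

lemma pC_nonneg: "0 \<le> pC K C x"
  by (simp add: pC_def)

lemma pC_le_T: "C \<in> set I \<Longrightarrow> pC K C x \<le> T K I x"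
  by (simp add: T_def)

lemma T_attained:
  assumes "I \<noteq> []"
  obtains C where "C \<in> set I" "pC K C x = T K I x"
proof -
  have "T K I x \<in> (\<lambda>C. pC K C x) ` set I"
    unfolding T_def using assms by (intro Max_in) auto
  then obtain C where "C \<in> set I" "T K I x = pC K C x"
    by (rule imageE)
  with that show thesis by simp
qed

lemma ell_le_U: "C \<in> set I \<Longrightarrow> ell K w \<alpha> x C \<mu> \<le> U K w \<alpha> I x \<mu>"
  by (simp add: U_def)

lemma U_attained:
  assumes "I \<noteq> []"
  obtains C where "C \<in> set I" "ell K w \<alpha> x C \<mu> = U K w \<alpha> I x \<mu>"
proof -
  have "U K w \<alpha> I x \<mu> \<in> (\<lambda>C. ell K w \<alpha> x C \<mu>) ` set I"
    unfolding U_def using assms by (intro Max_in) auto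
  then obtain C where "C \<in> set I" "U K w \<alpha> I x \<mu> = ell K w \<alpha> x C \<mu>"
    by (rule imageE)
  with that show thesis by simp
qed

lemma Cmu_maximizer:
  assumes "I \<noteq> []"
  shows "Cmu K w \<alpha> I x \<mu> \<in> set I"
    and "ell K w \<alpha> x (Cmu K w \<alpha> I x \<mu>) \<mu> = U K w \<alpha> I x \<mu>"
    and "\<And>C. C \<in> set I \<Longrightarrow> ell K w \<alpha> x C \<mu> = U K w \<alpha> I x \<mu> \<Longrightarrow>
           w C \<le> w (Cmu K w \<alpha> I x \<mu>)"
proof -
  define M where "M = {w (I ! j) | j. j < length I \<and> ell K w \<alpha> x (I ! j) \<mu> = U K w \<alpha> I x \<mu>}"
  define Q where "Q = (\<lambda>i. i < length I \<and> ell K w \<alpha> x (I ! i) \<mu> = U K w \<alpha> I x \<mu> \<and> w (I ! i) = Max M)"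
  have "finite M"
    unfolding M_def by (rule finite_subset[of _ "(\<lambda>j. w (I ! j)) ` {..<length I}"]) auto
  obtain C0 where "C0 \<in> set I" "ell K w \<alpha> x C0 \<mu> = U K w \<alpha> I x \<mu>"
    using assms by (rule U_attained)
  then have "M \<noteq> {}"
    by (auto simp: M_def in_set_conv_nth)
  with \<open>finite M\<close> have "Max M \<in> M"
    by (rule Max_in)
  then have "\<exists>i. Q i"
    by (auto simp: M_def Q_def)
  then have Q_Cidx: "Q (Cidx K w \<alpha> I x \<mu>)"
    unfolding Cidx_def M_def [symmetric] Q_def [symmetric] by (rule LeastI_ex)
  then show "Cmu K w \<alpha> I x \<mu> \<in> set I"
    and "ell K w \<alpha> x (Cmu K w \<alpha> I x \<mu>) \<mu> = U K w \<alpha> I x \<mu>"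
    by (auto simp: Q_def Cmu_def)
  have w_Cmu: "w (Cmu K w \<alpha> I x \<mu>) = Max M"
    using Q_Cidx by (simp add: Q_def Cmu_def)
  show "w C \<le> w (Cmu K w \<alpha> I x \<mu>)"
    if "C \<in> set I" "ell K w \<alpha> x C \<mu> = U K w \<alpha> I x \<mu>" for C
    unfolding w_Cmu using that \<open>finite M\<close> by (auto simp: M_def in_set_conv_nth intro!: Max_ge)
qed

lemma eventually_maximizers_attain_T:
  assumes "I \<noteq> []"
  shows "eventually (\<lambda>\<mu>. \<forall>C \<in> set I.
           ell K w \<alpha> x C \<mu> = U K w \<alpha> I x \<mu> \<longrightarrow> pC K C x = T K I x) at_top"
proof -
  obtain Cs where Cs: "Cs \<in> set I" "pC K Cs x = T K I x"
    using assms by (rule T_attained)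
  have "eventually (\<lambda>\<mu>. \<forall>C \<in> set I.
          pC K C x < T K I x \<longrightarrow> ell K w \<alpha> x C \<mu> < ell K w \<alpha> x Cs \<mu>) at_top"
  proof (rule eventually_ball_finite[OF finite_set], intro ballI)
    fix C assume "C \<in> set I"
    show "eventually (\<lambda>\<mu>. pC K C x < T K I x \<longrightarrow> ell K w \<alpha> x C \<mu> < ell K w \<alpha> x Cs \<mu>) at_top"
    proof (cases "pC K C x < T K I x")
      case True
      then show ?thesis
        using eventually_affine_less_at_top[of "pC K C x - (1 - \<alpha>)" "T K I x - (1 - \<alpha>)"
            "w C * pC K C x" "w Cs * T K I x"]
        by (simp add: ell_def Cs(2))
    qed simp
  qed
  then show ?thesis
  proof eventually_elim
    case (elim \<mu>)
    show ?case
    proof (intro ballI impI)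
      fix C assume C: "C \<in> set I" "ell K w \<alpha> x C \<mu> = U K w \<alpha> I x \<mu>"
      have "\<not> pC K C x < T K I x"
        using elim C ell_le_U[OF Cs(1), of K w \<alpha> x \<mu>] by fastforce
      then show "pC K C x = T K I x"
        using pC_le_T[OF C(1), of K x] by linarith
    qed
  qed
qed

lemma eventually_Cmu_maximizes_pC:
  assumes "I \<noteq> []"
  shows "eventually (\<lambda>\<mu>. pC K (Cmu K w \<alpha> I x \<mu>) x = T K I x \<and>
           (\<forall>C \<in> set I. pC K C x = T K I x \<longrightarrow> w C \<le> w (Cmu K w \<alpha> I x \<mu>))) at_top"
  using eventually_maximizers_attain_T[OF assms, of K w \<alpha> x]
proof eventually_elim
  case (elim \<mu>)
  let ?C0 = "Cmu K w \<alpha> I x \<mu>"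
  have C0: "pC K ?C0 x = T K I x"
    using elim Cmu_maximizer(1,2)[OF assms, of K w \<alpha> x \<mu>] by blast
  have "w C \<le> w ?C0" if "C \<in> set I" "pC K C x = T K I x" for C
  proof (cases "ell K w \<alpha> x C \<mu> = U K w \<alpha> I x \<mu>")
    case True
    then show ?thesis by (rule Cmu_maximizer(3)[OF assms that(1)])
  next
    case False
    have "ell K w \<alpha> x C \<mu> < ell K w \<alpha> x ?C0 \<mu>"
      using False ell_le_U[OF that(1), of K w \<alpha> x \<mu>] Cmu_maximizer(2)[OF assms, of K w \<alpha> x \<mu>]
      by (subst less_le) simp
    then have "w C * T K I x < w ?C0 * T K I x"
      using that(2) C0 by (simp add: ell_def)
    then have "w C < w ?C0"
      by (rule mult_right_less_imp_less) (use pC_nonneg[of K ?C0 x] C0 in simp)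
    then show ?thesis by simp
  qed
  then show ?case using C0 by blast
qed

lemma eventually_Dmu_eq:
  assumes "I \<noteq> []" and w_nonneg: "\<And>C. C \<in> set I \<Longrightarrow> 0 \<le> w C"
  shows "eventually (\<lambda>\<mu>. Dmu K w \<alpha> I x \<mu> = (if T K I x \<ge> 1 - \<alpha> then 1 else 0)) at_top"
proof (cases "T K I x \<ge> 1 - \<alpha>")
  case True
  obtain Cs where Cs: "Cs \<in> set I" "pC K Cs x = T K I x"
    using assms(1) by (rule T_attained)
  show ?thesis
    using eventually_ge_at_top[of "0::real"]
  proof eventually_elim
    case (elim \<mu>)
    have "0 \<le> ell K w \<alpha> x Cs \<mu>"
      using elim True Cs w_nonneg[OF Cs(1)] pC_nonneg[of K Cs x] by (simp add: ell_def)
    then show ?case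
      using ell_le_U[OF Cs(1), of K w \<alpha> x \<mu>] True by (simp add: Dmu_def)
  qed
next
  case False
  have "eventually (\<lambda>\<mu>. \<forall>C \<in> set I. ell K w \<alpha> x C \<mu> < 0) at_top"
  proof (rule eventually_ball_finite[OF finite_set], intro ballI)
    fix C assume "C \<in> set I"
    then have "pC K C x - (1 - \<alpha>) < 0"
      using False pC_le_T[of C I K x] by simp
    then show "eventually (\<lambda>\<mu>. ell K w \<alpha> x C \<mu> < 0) at_top"
      using eventually_affine_less_at_top[of _ 0 "w C * pC K C x" 0] by (simp add: ell_def)
  qed
  then show ?thesis
  proof eventually_elim
    case (elim \<mu>)
    obtain C where "C \<in> set I" "ell K w \<alpha> x C \<mu> = U K w \<alpha> I x \<mu>"
      using assms(1) by (rule U_attained)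
    then show ?case using elim False by (auto simp: Dmu_def)
  qed
qed

theorem proposition3:
  fixes K :: "'x \<Rightarrow> 'y measure" and I :: "'y set list" and w :: "'y set \<Rightarrow> real"
    and \<alpha> B :: real
  assumes "\<And>x. prob_space (K x)"
    and "\<And>x C. C \<in> set I \<Longrightarrow> C \<in> sets (K x)"
    and "I \<noteq> []" and "distinct I"
    and "0 < \<alpha>" and "\<alpha> < 1"
    and "\<And>C. C \<in> set I \<Longrightarrow> 0 < w C \<and> w C < B"
  shows "\<forall>x. \<exists>\<mu>0 \<ge> 0. \<forall>\<mu> \<ge> \<mu>0.
           Dmu K w \<alpha> I x \<mu> = (if T K I x \<ge> 1 - \<alpha> then 1 else 0) \<and>
           Cmu K w \<alpha> I x \<mu> \<in> set I \<and>
           pC K (Cmu K w \<alpha> I x \<mu>) x = T K I x \<and>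
           (\<forall>C\<in>set I. pC K C x = T K I x \<longrightarrow> w C \<le> w (Cmu K w \<alpha> I x \<mu>))"
proof
  \<comment> \<open>Only \<open>I \<noteq> []\<close> and \<open>w \<ge> 0\<close> are needed: \<open>\<mu>0\<close> may depend on x, and I is finite,
    so no uniform bound B and no property of the kernel beyond \<open>pC \<ge> 0\<close> enter.\<close>
  fix x
  have w_nonneg: "\<And>C. C \<in> set I \<Longrightarrow> 0 \<le> w C"
    using assms(7) by fastforce
  have "eventually (\<lambda>\<mu>. Dmu K w \<alpha> I x \<mu> = (if T K I x \<ge> 1 - \<alpha> then 1 else 0)) at_top"
    using assms(3) w_nonneg by (rule eventually_Dmu_eq)
  moreover have "eventually (\<lambda>\<mu>. pC K (Cmu K w \<alpha> I x \<mu>) x = T K I x \<and>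
           (\<forall>C\<in>set I. pC K C x = T K I x \<longrightarrow> w C \<le> w (Cmu K w \<alpha> I x \<mu>))) at_top"
    using assms(3) by (rule eventually_Cmu_maximizes_pC)
  ultimately have "eventually (\<lambda>\<mu>. Dmu K w \<alpha> I x \<mu> = (if T K I x \<ge> 1 - \<alpha> then 1 else 0) \<and>
           Cmu K w \<alpha> I x \<mu> \<in> set I \<and>
           pC K (Cmu K w \<alpha> I x \<mu>) x = T K I x \<and>
           (\<forall>C\<in>set I. pC K C x = T K I x \<longrightarrow> w C \<le> w (Cmu K w \<alpha> I x \<mu>))) at_top"
    (is "eventually ?P at_top")
  proof eventually_elim
    case (elim \<mu>)
    then show ?case
      using Cmu_maximizer(1)[OF assms(3), of K w \<alpha> x \<mu>] by simp
  qed
  then obtain N where "\<forall>\<mu> \<ge> N. ?P \<mu>"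
    unfolding eventually_at_top_linorder by blast
  then show "\<exists>\<mu>0 \<ge> 0. \<forall>\<mu> \<ge> \<mu>0. ?P \<mu>"
    by (intro exI[of _ "max N 0"]) auto
qed

end
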